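(* Let $I\subseteq\mathbb{R}_+$ be a nonempty interval containing $0$ and let $f\colon I^n\to\mathbb{R}$. The following are equivalent: (i) $f$ is comonotonically modular; (ii) $f$ is invariant under horizontal min-differences; (iii) there exists $g\colon I^n\to\mathbb{R}$ such that for every $\sigma\in S_n$ and every $\mathbf{x}\in I^n_\sigma$, $$f(\mathbf{x})=g(\mathbf{0})+\sum_{i\in[n]}\Big(g\big(x_{\sigma(i)}\mathbf{1}_{A^\uparrow_\sigma(i)}\big)-g\big(x_{\sigma(i)}\mathbf{1}_{A^\uparrow_\sigma(i+1)}\big)\Big).$$ Moreover, in this case one can take $g=f$ in (iii).
   Context: Notation: $[n]=\{1,\ldots,n\}$; $S_n$ is the set of permutations of $[n]$; $\mathbf{1}_A$ is the indicator tuple of $A\subseteq[n]$, $\mathbf{0}=\mathbf{1}_\varnothing$. For $\sigma\in S_n$, $\mathbb{R}^n_\sigma=\{\mathbf{x}: x_{\sigma(1)}\leq\cdots\leq x_{\sigma(n)}\}$, $I^n_\sigma=I^n\cap\mathbb{R}^n_\sigma$, $A^\uparrow_\sigma(i)=\{\sigma(i),\ldots,\sigma(n)\}$, $A^\uparrow_\sigma(n+1)=\varnothing$. $\wedge,\vee$ denote componentwise min and max; $\mathbf{x}\wedge c$ is the tuple with components $\min(x_i,c)$. Two tuples $\mathbf{x},\mathbf{x}'\in I^n$ are comonotonic if $\mathbf{x},\mathbf{x}'\in I^n_\sigma$ for some $\sigma\in S_n$. A function $f\colon I^n\to\mathbb{R}$ is comonotonically modular if $f(\mathbf{x})+f(\mathbf{x}')=f(\mathbf{x}\wedge\mathbf{x}')+f(\mathbf{x}\vee\mathbf{x}')$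 for all comonotonic $\mathbf{x},\mathbf{x}'\in I^n$. For $c\geq 0$, $[\mathbf{x}]_c$ is the tuple whose $i$th component is $0$ if $x_i\leq c$ and $x_i$ otherwise. For $I\subseteq\mathbb{R}_+$, $f$ is invariant under horizontal min-differences if $f(\mathbf{x})-f(\mathbf{x}\wedge c)=f([\mathbf{x}]_c)-f([\mathbf{x}]_c\wedge c)$ for all $\mathbf{x}\in I^n$, $c\in I$. *)

theory Defs
  imports "HOL-Analysis.Analysis" "HOL-Combinatorics.Permutations"
begin

definition tuples :: "nat \<Rightarrow> real set \<Rightarrow> (nat \<Rightarrow> real) set" where
  "tuples n I = PiE {1..n} (\<lambda>_. I)"

definition tuples_sigma :: "nat \<Rightarrow> real set \<Rightarrow> (nat \<Rightarrow> nat) \<Rightarrow> (nat \<Rightarrow> real) set" where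
  "tuples_sigma n I \<sigma> = {x \<in> tuples n I. \<forall>i\<in>{1..<n}. x (\<sigma> i) \<le> x (\<sigma> (Suc i))}"

definition cmin :: "nat \<Rightarrow> (nat \<Rightarrow> real) \<Rightarrow> (nat \<Rightarrow> real) \<Rightarrow> (nat \<Rightarrow> real)" where
  "cmin n x y = restrict (\<lambda>i. min (x i) (y i)) {1..n}"

definition cmax :: "nat \<Rightarrow> (nat \<Rightarrow> real) \<Rightarrow> (nat \<Rightarrow> real) \<Rightarrow> (nat \<Rightarrow> real)" where
  "cmax n x y = restrict (\<lambda>i. max (x i) (y i)) {1..n}"

definition cminc :: "nat \<Rightarrow> (nat \<Rightarrow> real) \<Rightarrow> real \<Rightarrow> (nat \<Rightarrow> real)" where
  "cminc n x c = restrict (\<lambda>i. min (x i) c) {1..n}"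

definition cutc :: "nat \<Rightarrow> real \<Rightarrow> (nat \<Rightarrow> real) \<Rightarrow> (nat \<Rightarrow> real)" where
  "cutc n c x = restrict (\<lambda>i. if x i \<le> c then 0 else x i) {1..n}"

definition scal_ind :: "nat \<Rightarrow> real \<Rightarrow> nat set \<Rightarrow> (nat \<Rightarrow> real)" where
  "scal_ind n c A = restrict (\<lambda>i. if i \<in> A then c else 0) {1..n}"

definition Aup :: "nat \<Rightarrow> (nat \<Rightarrow> nat) \<Rightarrow> nat \<Rightarrow> nat set" where
  "Aup n \<sigma> i = \<sigma> ` {i..n}"

definition comonotonic :: "nat \<Rightarrow> real set \<Rightarrow> (nat \<Rightarrow> real) \<Rightarrow> (nat \<Rightarrow> real) \<Rightarrow> bool" where
  "comonotonic n I x y \<longleftrightarrow>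
     (\<exists>\<sigma>. \<sigma> permutes {1..n} \<and> x \<in> tuples_sigma n I \<sigma> \<and> y \<in> tuples_sigma n I \<sigma>)"

definition comon_modular :: "nat \<Rightarrow> real set \<Rightarrow> ((nat \<Rightarrow> real) \<Rightarrow> real) \<Rightarrow> bool" where
  "comon_modular n I f \<longleftrightarrow>
     (\<forall>x\<in>tuples n I. \<forall>y\<in>tuples n I. comonotonic n I x y \<longrightarrow>
        f x + f y = f (cmin n x y) + f (cmax n x y))"

definition horiz_min_inv :: "nat \<Rightarrow> real set \<Rightarrow> ((nat \<Rightarrow> real) \<Rightarrow> real) \<Rightarrow> bool" where
  "horiz_min_inv n I f \<longleftrightarrow>
     (\<forall>x\<in>tuples n I. \<forall>c\<in>I.
        f x - f (cminc n x c) = f (cutc n c x) - f (cminc n (cutc n c x) c))"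

definition rep_by :: "nat \<Rightarrow> real set \<Rightarrow> ((nat \<Rightarrow> real) \<Rightarrow> real) \<Rightarrow> ((nat \<Rightarrow> real) \<Rightarrow> real) \<Rightarrow> bool" where
  "rep_by n I f g \<longleftrightarrow>
     (\<forall>\<sigma>. \<sigma> permutes {1..n} \<longrightarrow> (\<forall>x\<in>tuples_sigma n I \<sigma>.
        f x = g (scal_ind n 0 {}) +
          (\<Sum>i\<in>{1..n}. g (scal_ind n (x (\<sigma> i)) (Aup n \<sigma> i))
                       - g (scal_ind n (x (\<sigma> i)) (Aup n \<sigma> (Suc i))))))"

end

theory Submission
  imports Defs
begin

(* Fix a permutation sigma of [n] and a tuple x in I^n_sigma.  The "upper parts"
   x^(k) of x, obtained by zeroing all components outside A_sigma(k), form a chain from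
   x^(1) = x down to x^(n+1) = 0, so f(x) - f(0) telescopes into the layer differences
   f(x^(k)) - f(x^(k+1)).  Both comonotonic modularity (applied to x_sigma(k) 1_{A_sigma(k)} and
   x^(k+1)) and invariance under horizontal min-differences (applied to x^(k) and x^(k+1) with
   c = x_sigma(k)) show that this layer difference equals
   f(x_sigma(k) 1_{A_sigma(k)}) - f(x_sigma(k) 1_{A_sigma(k+1)}); hence (i) and (ii) each give the
   representation (iii) with g = f.  Conversely, a representation by g writes f on I^n_sigma as a
   constant plus a sum of functions of the single values x_sigma(i); such an expression satisfies
   f x + f y = f u + f v whenever u, v, x, y are sorted by sigma and the pairs
   {x_sigma(i), y_sigma(i)} and {u_sigma(i), v_sigma(i)} agree for every i.  Both (i) and (ii) are
   identities of this kind, which closes the cycle of implications. *)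

lemma mem_Aup_iff:
  assumes "\<sigma> permutes {1..n}" and "i \<in> {1..n}"
  shows "\<sigma> i \<in> Aup n \<sigma> k \<longleftrightarrow> k \<le> i"
  using assms permutes_inj[OF assms(1)] by (auto simp: Aup_def inj_image_mem_iff)

lemma Aup_first: "\<sigma> permutes {1..n} \<Longrightarrow> Aup n \<sigma> 1 = {1..n}"
  by (simp add: Aup_def permutes_image)

lemma Aup_last: "Aup n \<sigma> (Suc n) = {}"
  by (simp add: Aup_def)

lemma tuple_eq_along_perm:
  assumes "\<sigma> permutes {1..n}" and "u \<in> extensional {1..n}" and "v \<in> extensional {1..n}"
    and "\<And>i. i \<in> {1..n} \<Longrightarrow> u (\<sigma> i) = v (\<sigma> i)"
  shows "u = v"
proof (rule extensionalityI[OF assms(2,3)])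
  fix j assume "j \<in> {1..n}"
  then obtain i where "i \<in> {1..n}" "j = \<sigma> i"
    using permutes_image[OF assms(1)] by blast
  then show "u j = v j" using assms(4) by simp
qed

lemma tuples_sigma_iff:
  assumes "\<sigma> permutes {1..n}"
  shows "y \<in> tuples_sigma n I \<sigma> \<longleftrightarrow> y \<in> extensional {1..n} \<and> (\<forall>i\<in>{1..n}. y (\<sigma> i) \<in> I)
           \<and> (\<forall>i\<in>{1..<n}. y (\<sigma> i) \<le> y (\<sigma> (Suc i)))"
proof -
  have "(\<forall>j\<in>{1..n}. y j \<in> I) \<longleftrightarrow> (\<forall>i\<in>{1..n}. y (\<sigma> i) \<in> I)"
    using permutes_image[OF assms] by (metis image_iff permutes_in_image[OF assms])
  then show ?thesis by (auto simp: tuples_sigma_def tuples_def PiE_iff)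
qed

lemma tuples_sigmaI:
  assumes "\<sigma> permutes {1..n}" and "y \<in> extensional {1..n}"
    and "\<And>i. i \<in> {1..n} \<Longrightarrow> y (\<sigma> i) \<in> I"
    and "\<And>i. i \<in> {1..<n} \<Longrightarrow> y (\<sigma> i) \<le> y (\<sigma> (Suc i))"
  shows "y \<in> tuples_sigma n I \<sigma>"
  using assms by (simp add: tuples_sigma_iff)

lemma tuples_sigmaD:
  assumes "\<sigma> permutes {1..n}" and "x \<in> tuples_sigma n I \<sigma>"
  shows "x \<in> extensional {1..n}" and "\<And>i. i \<in> {1..n} \<Longrightarrow> x (\<sigma> i) \<in> I"
    and "\<And>i. i \<in> {1..<n} \<Longrightarrow> x (\<sigma> i) \<le> x (\<sigma> (Suc i))"
  using assms by (simp_all add: tuples_sigma_iff)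

lemma tuples_sigma_sorted:
  assumes "x \<in> tuples_sigma n I \<sigma>" and "1 \<le> i" and "i \<le> j" and "j \<le> n"
  shows "x (\<sigma> i) \<le> x (\<sigma> j)"
  using assms(3,4)
proof (induction j rule: dec_induct)
  case (step m)
  then have "x (\<sigma> m) \<le> x (\<sigma> (Suc m))"
    using assms(1,2) by (auto simp: tuples_sigma_def)
  with step show ?case by simp
qed simp

text \<open>Every tuple is sorted by some permutation: sort the index list by the values of \<open>x\<close>.\<close>

lemma sorting_permutation_exists:
  assumes "x \<in> tuples n I"
  obtains \<sigma> where "\<sigma> permutes {1..n}" and "x \<in> tuples_sigma n I \<sigma>"
proof -
  define xs where "xs = sort_key x [1..<Suc n]"
  have len: "length xs = n" and dist: "distinct xs" and sorted: "sorted (map x xs)"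
    by (simp_all add: xs_def)
  have set_xs: "set xs = {1..n}"
    using arg_cong[OF mset_sort[of x "[1..<Suc n]"], of set_mset] by (auto simp: xs_def)
  define \<sigma> where "\<sigma> i = (if i \<in> {1..n} then xs ! (i - 1) else i)" for i
  have shift: "bij_betw (\<lambda>i. i - 1) {1..n} {..<n}"
    by (rule bij_betwI[where g = Suc]) auto
  have "bij_betw ((!) xs \<circ> (\<lambda>i. i - 1)) {1..n} {1..n}"
    using bij_betw_trans[OF shift bij_betw_nth[OF dist _ refl]] len set_xs by simp
  then have "bij_betw \<sigma> {1..n} {1..n}"
    by (rule bij_betw_cong[THEN iffD1, rotated]) (simp add: \<sigma>_def)
  then have perm: "\<sigma> permutes {1..n}"
    by (rule bij_imp_permutes) (auto simp: \<sigma>_def)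
  have "x (\<sigma> i) \<le> x (\<sigma> (Suc i))" if "i \<in> {1..<n}" for i
    using that sorted_nth_mono[OF sorted, of "i - 1" i] len by (auto simp: \<sigma>_def)
  then have "x \<in> tuples_sigma n I \<sigma>"
    using assms by (simp add: tuples_sigma_def)
  with perm show thesis by (rule that)
qed

lemma tuples_sigma_pointwise:
  fixes \<phi> :: "real \<Rightarrow> real \<Rightarrow> real"
  assumes \<sigma>: "\<sigma> permutes {1..n}"
    and x: "x \<in> tuples_sigma n I \<sigma>" and y: "y \<in> tuples_sigma n I \<sigma>"
    and z_ext: "z \<in> extensional {1..n}"
    and z_val: "\<And>i. i \<in> {1..n} \<Longrightarrow> z (\<sigma> i) = \<phi> (x (\<sigma> i)) (y (\<sigma> i))"
    and closed: "\<And>a b. a \<in> I \<Longrightarrow> b \<in> I \<Longrightarrow> \<phi> a b \<in> I"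
    and mono: "\<And>a b a' b'. \<lbrakk>a \<in> I; b \<in> I; a' \<in> I; b' \<in> I; a \<le> a'; b \<le> b'\<rbrakk> \<Longrightarrow> \<phi> a b \<le> \<phi> a' b'"
  shows "z \<in> tuples_sigma n I \<sigma>"
proof (rule tuples_sigmaI[OF \<sigma> z_ext])
  show "z (\<sigma> i) \<in> I" if "i \<in> {1..n}" for i
    using that z_val closed tuples_sigmaD(2)[OF \<sigma> x] tuples_sigmaD(2)[OF \<sigma> y] by simp
  show "z (\<sigma> i) \<le> z (\<sigma> (Suc i))" if i: "i \<in> {1..<n}" for i
  proof -
    have i_range: "i \<in> {1..n}" "Suc i \<in> {1..n}" using i by auto
    show ?thesis
      unfolding z_val[OF i_range(1)] z_val[OF i_range(2)]
      using mono tuples_sigmaD(2)[OF \<sigma> x] tuples_sigmaD(2)[OF \<sigma> y] i_range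
        tuples_sigmaD(3)[OF \<sigma> x i] tuples_sigmaD(3)[OF \<sigma> y i] by blast
  qed
qed

definition upper_part :: "nat \<Rightarrow> (nat \<Rightarrow> nat) \<Rightarrow> (nat \<Rightarrow> real) \<Rightarrow> nat \<Rightarrow> (nat \<Rightarrow> real)" where
  "upper_part n \<sigma> x k = restrict (\<lambda>j. if j \<in> Aup n \<sigma> k then x j else 0) {1..n}"

lemma upper_part_first:
  assumes "\<sigma> permutes {1..n}" and "x \<in> tuples_sigma n I \<sigma>"
  shows "upper_part n \<sigma> x 1 = x"
  using tuples_sigmaD(1)[OF assms]
  unfolding upper_part_def Aup_first[OF assms(1)] by (auto simp: extensional_def)

lemma upper_part_last: "upper_part n \<sigma> x (Suc n) = scal_ind n 0 {}"
  by (simp add: upper_part_def scal_ind_def Aup_last)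

lemma permutes_range_mem: "\<sigma> permutes {1..n} \<Longrightarrow> i \<in> {1..n} \<Longrightarrow> \<sigma> i \<in> {1..n}"
  by (rule permutes_in_image[THEN iffD2])

lemma upper_part_along:
  assumes "\<sigma> permutes {1..n}" and "i \<in> {1..n}"
  shows "upper_part n \<sigma> x k (\<sigma> i) = (if k \<le> i then x (\<sigma> i) else 0)"
  using permutes_range_mem[OF assms] mem_Aup_iff[OF assms] by (simp add: upper_part_def)

lemma scal_ind_along:
  assumes "\<sigma> permutes {1..n}" and "i \<in> {1..n}"
  shows "scal_ind n c (Aup n \<sigma> k) (\<sigma> i) = (if k \<le> i then c else 0)"
  using permutes_range_mem[OF assms] mem_Aup_iff[OF assms] by (simp add: scal_ind_def)

text \<open>Since \<open>I \<subseteq> \<real>\<^sub>+\<close> contains \<open>0\<close>, upper parts and the tuples \<open>c \<one>\<^bsub>A\<^sup>\<up>\<^sub>\<sigma>(k)\<^esub>\<close> are again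
  sorted by \<open>\<sigma>\<close>: before position \<open>k\<close> they vanish, from position \<open>k\<close> on they are nonnegative
  and increasing.\<close>

lemma upper_part_sorted:
  assumes \<sigma>: "\<sigma> permutes {1..n}" and x: "x \<in> tuples_sigma n I \<sigma>"
    and I_nonneg: "I \<subseteq> {0..}" and zero_I: "0 \<in> I"
  shows "upper_part n \<sigma> x k \<in> tuples_sigma n I \<sigma>"
proof (rule tuples_sigmaI[OF \<sigma>])
  show "upper_part n \<sigma> x k (\<sigma> i) \<in> I" if "i \<in> {1..n}" for i
    using that upper_part_along[OF \<sigma> that] tuples_sigmaD(2)[OF \<sigma> x] zero_I by simp
  show "upper_part n \<sigma> x k (\<sigma> i) \<le> upper_part n \<sigma> x k (\<sigma> (Suc i))" if i: "i \<in> {1..<n}" for i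
  proof -
    have i_range: "i \<in> {1..n}" "Suc i \<in> {1..n}" using i by auto
    have "0 \<le> x (\<sigma> (Suc i))"
      using tuples_sigmaD(2)[OF \<sigma> x i_range(2)] I_nonneg by auto
    then show ?thesis
      using tuples_sigmaD(3)[OF \<sigma> x i]
      unfolding upper_part_along[OF \<sigma> i_range(1)] upper_part_along[OF \<sigma> i_range(2)] by auto
  qed
qed (simp add: upper_part_def)

lemma scal_ind_sorted:
  assumes \<sigma>: "\<sigma> permutes {1..n}" and "c \<in> I" and "0 \<le> c" and "0 \<in> I"
  shows "scal_ind n c (Aup n \<sigma> k) \<in> tuples_sigma n I \<sigma>"
proof (rule tuples_sigmaI[OF \<sigma>])
  show "scal_ind n c (Aup n \<sigma> k) (\<sigma> i) \<in> I" if "i \<in> {1..n}" for i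
    using assms by (simp add: scal_ind_along[OF \<sigma> that])
  show "scal_ind n c (Aup n \<sigma> k) (\<sigma> i) \<le> scal_ind n c (Aup n \<sigma> k) (\<sigma> (Suc i))"
    if "i \<in> {1..<n}" for i
    using that assms by (simp add: scal_ind_along[OF \<sigma>])
qed (simp add: scal_ind_def)

lemma representation_by_telescoping:
  fixes f :: "(nat \<Rightarrow> real) \<Rightarrow> real"
  assumes \<sigma>: "\<sigma> permutes {1..n}" and x: "x \<in> tuples_sigma n I \<sigma>"
    and layer: "\<And>k. k \<in> {1..n} \<Longrightarrow> f (upper_part n \<sigma> x k) - f (upper_part n \<sigma> x (Suc k))
       = f (scal_ind n (x (\<sigma> k)) (Aup n \<sigma> k)) - f (scal_ind n (x (\<sigma> k)) (Aup n \<sigma> (Suc k)))"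
  shows "f x = f (scal_ind n 0 {}) +
          (\<Sum>i\<in>{1..n}. f (scal_ind n (x (\<sigma> i)) (Aup n \<sigma> i))
                       - f (scal_ind n (x (\<sigma> i)) (Aup n \<sigma> (Suc i))))"
proof -
  define F where "F k = - f (upper_part n \<sigma> x k)" for k
  have "(\<Sum>i\<in>{1..n}. f (scal_ind n (x (\<sigma> i)) (Aup n \<sigma> i))
                       - f (scal_ind n (x (\<sigma> i)) (Aup n \<sigma> (Suc i))))
      = (\<Sum>i = 1..n. F (Suc i) - F i)"
    using layer by (auto simp: F_def intro!: sum.cong)
  also have "\<dots> = F (Suc n) - F 1"
    by (rule sum_Suc_diff) simp
  finally show ?thesis
    unfolding F_def upper_part_first[OF \<sigma> x] upper_part_last by simp
qed

text \<open>(i) gives the layer identity: with \<open>c = x\<^sub>\<sigma>\<^sub>(\<^sub>k\<^sub>)\<close>, the comonotonic tuples \<open>c \<one>\<^bsub>A\<^sup>\<up>\<^sub>\<sigma>(k)\<^esub>\<close> and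
  \<open>x\<^sup>(\<^sup>k\<^sup>+\<^sup>1\<^sup>)\<close> have meet \<open>c \<one>\<^bsub>A\<^sup>\<up>\<^sub>\<sigma>(k+1)\<^esub>\<close> and join \<open>x\<^sup>(\<^sup>k\<^sup>)\<close>.\<close>

lemma layer_step_comon_modular:
  assumes cm: "comon_modular n I f" and \<sigma>: "\<sigma> permutes {1..n}" and x: "x \<in> tuples_sigma n I \<sigma>"
    and I_nonneg: "I \<subseteq> {0..}" and zero_I: "0 \<in> I" and k: "k \<in> {1..n}"
  shows "f (upper_part n \<sigma> x k) - f (upper_part n \<sigma> x (Suc k))
       = f (scal_ind n (x (\<sigma> k)) (Aup n \<sigma> k)) - f (scal_ind n (x (\<sigma> k)) (Aup n \<sigma> (Suc k)))"
proof -
  define c where "c = x (\<sigma> k)"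
  have c_I: "c \<in> I" and c_nonneg: "0 \<le> c"
    using tuples_sigmaD(2)[OF \<sigma> x k] I_nonneg by (auto simp: c_def)
  have c_below: "c \<le> x (\<sigma> i)" if "i \<in> {1..n}" "k \<le> i" for i
    using tuples_sigma_sorted[OF x] k that by (auto simp: c_def)
  define u where "u = scal_ind n c (Aup n \<sigma> k)"
  define v where "v = upper_part n \<sigma> x (Suc k)"
  have u: "u \<in> tuples_sigma n I \<sigma>"
    unfolding u_def using scal_ind_sorted[OF \<sigma> c_I c_nonneg zero_I] .
  have v: "v \<in> tuples_sigma n I \<sigma>"
    unfolding v_def using upper_part_sorted[OF \<sigma> x I_nonneg zero_I] .
  note along = scal_ind_along[OF \<sigma>] upper_part_along[OF \<sigma>]
  have modular: "f u + f v = f (cmin n u v) + f (cmax n u v)"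
    using cm u v \<sigma> unfolding comon_modular_def comonotonic_def tuples_sigma_def by blast
  have meet: "cmin n u v = scal_ind n c (Aup n \<sigma> (Suc k))"
  proof (rule tuple_eq_along_perm[OF \<sigma>])
    fix i assume i: "i \<in> {1..n}"
    show "cmin n u v (\<sigma> i) = scal_ind n c (Aup n \<sigma> (Suc k)) (\<sigma> i)"
      using c_nonneg c_below[OF i] i permutes_range_mem[OF \<sigma> i]
      by (auto simp: cmin_def u_def v_def
          along)
  qed (simp_all add: cmin_def scal_ind_def)
  have join: "cmax n u v = upper_part n \<sigma> x k"
  proof (rule tuple_eq_along_perm[OF \<sigma>])
    fix i assume i: "i \<in> {1..n}"
    show "cmax n u v (\<sigma> i) = upper_part n \<sigma> x k (\<sigma> i)"
      using c_nonneg c_below[OF i] i permutes_range_mem[OF \<sigma> i] tuples_sigmaD(2)[OF \<sigma> x i] I_nonneg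
      by (cases "i = k") (auto simp: cmax_def u_def v_def c_def
          along)
  qed (simp_all add: cmax_def upper_part_def)
  from modular have "f (upper_part n \<sigma> x k) - f v = f u - f (scal_ind n c (Aup n \<sigma> (Suc k)))"
    unfolding meet join by linarith
  then show ?thesis
    by (simp add: u_def v_def c_def)
qed

text \<open>(ii) gives the same layer identity: with \<open>c = x\<^sub>\<sigma>\<^sub>(\<^sub>k\<^sub>)\<close>, the tuples \<open>x\<^sup>(\<^sup>k\<^sup>)\<close> and \<open>x\<^sup>(\<^sup>k\<^sup>+\<^sup>1\<^sup>)\<close> have
  the same cut \<open>[\<cdot>]\<^sub>c\<close>, while their truncations at \<open>c\<close> are \<open>c \<one>\<^bsub>A\<^sup>\<up>\<^sub>\<sigma>(k)\<^esub>\<close> and \<open>c \<one>\<^bsub>A\<^sup>\<up>\<^sub>\<sigma>(k+1)\<^esub>\<close>.\<close>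

lemma layer_step_horiz_min_inv:
  assumes hm: "horiz_min_inv n I f" and \<sigma>: "\<sigma> permutes {1..n}" and x: "x \<in> tuples_sigma n I \<sigma>"
    and I_nonneg: "I \<subseteq> {0..}" and zero_I: "0 \<in> I" and k: "k \<in> {1..n}"
  shows "f (upper_part n \<sigma> x k) - f (upper_part n \<sigma> x (Suc k))
       = f (scal_ind n (x (\<sigma> k)) (Aup n \<sigma> k)) - f (scal_ind n (x (\<sigma> k)) (Aup n \<sigma> (Suc k)))"
proof -
  define c where "c = x (\<sigma> k)"
  have c_I: "c \<in> I" and c_nonneg: "0 \<le> c"
    using tuples_sigmaD(2)[OF \<sigma> x k] I_nonneg by (auto simp: c_def)
  have c_below: "c \<le> x (\<sigma> i)" if "i \<in> {1..n}" "k \<le> i" for i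
    using tuples_sigma_sorted[OF x] k that by (auto simp: c_def)
  have min_diff: "f (upper_part n \<sigma> x j) - f (cminc n (upper_part n \<sigma> x j) c)
      = f (cutc n c (upper_part n \<sigma> x j)) - f (cminc n (cutc n c (upper_part n \<sigma> x j)) c)" for j
    using hm c_I upper_part_sorted[OF \<sigma> x I_nonneg zero_I]
    unfolding horiz_min_inv_def tuples_sigma_def by blast
  note along = scal_ind_along[OF \<sigma>] upper_part_along[OF \<sigma>]
  have truncation: "cminc n (upper_part n \<sigma> x j) c = scal_ind n c (Aup n \<sigma> j)" if "k \<le> j" for j
  proof (rule tuple_eq_along_perm[OF \<sigma>])
    fix i assume i: "i \<in> {1..n}"
    show "cminc n (upper_part n \<sigma> x j) c (\<sigma> i) = scal_ind n c (Aup n \<sigma> j) (\<sigma> i)"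
      using c_nonneg c_below[OF i] that i permutes_range_mem[OF \<sigma> i]
      by (auto simp: cminc_def along)
  qed (simp_all add: cminc_def scal_ind_def)
  have same_cut: "cutc n c (upper_part n \<sigma> x k) = cutc n c (upper_part n \<sigma> x (Suc k))"
  proof (rule tuple_eq_along_perm[OF \<sigma>])
    fix i assume i: "i \<in> {1..n}"
    show "cutc n c (upper_part n \<sigma> x k) (\<sigma> i) = cutc n c (upper_part n \<sigma> x (Suc k)) (\<sigma> i)"
      using i permutes_range_mem[OF \<sigma> i]
      by (cases "i = k") (auto simp: cutc_def c_def along)
  qed (simp_all add: cutc_def)
  from min_diff[of k] min_diff[of "Suc k"]
  have "f (upper_part n \<sigma> x k) - f (upper_part n \<sigma> x (Suc k))
      = f (scal_ind n c (Aup n \<sigma> k)) - f (scal_ind n c (Aup n \<sigma> (Suc k)))"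
    unfolding truncation[OF order_refl] truncation[OF le_SucI[OF order_refl]] same_cut by linarith
  then show ?thesis
    by (simp add: c_def)
qed

lemma comon_modular_imp_rep:
  assumes "comon_modular n I f" and "I \<subseteq> {0..}" and "0 \<in> I"
  shows "rep_by n I f f"
  unfolding rep_by_def
  using representation_by_telescoping layer_step_comon_modular[OF assms(1) _ _ assms(2,3)] by blast

lemma horiz_min_inv_imp_rep:
  assumes "horiz_min_inv n I f" and "I \<subseteq> {0..}" and "0 \<in> I"
  shows "rep_by n I f f"
  unfolding rep_by_def
  using representation_by_telescoping layer_step_horiz_min_inv[OF assms(1) _ _ assms(2,3)] by blast

text \<open>Conversely, a function represented as in (iii) is, on \<open>I\<^sup>n\<^sub>\<sigma>\<close>, a constant plus a sum of
  functions of the single values \<open>x\<^sub>\<sigma>\<^sub>(\<^sub>i\<^sub>)\<close>.\<close>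

lemma representation_exchange:
  assumes rep: "rep_by n I f g" and \<sigma>: "\<sigma> permutes {1..n}"
    and x: "x \<in> tuples_sigma n I \<sigma>" and y: "y \<in> tuples_sigma n I \<sigma>"
    and u: "u \<in> tuples_sigma n I \<sigma>" and v: "v \<in> tuples_sigma n I \<sigma>"
    and pairs: "\<And>i. i \<in> {1..n} \<Longrightarrow>
      (u (\<sigma> i) = x (\<sigma> i) \<and> v (\<sigma> i) = y (\<sigma> i)) \<or> (u (\<sigma> i) = y (\<sigma> i) \<and> v (\<sigma> i) = x (\<sigma> i))"
  shows "f x + f y = f u + f v"
proof -
  define T where "T i c = g (scal_ind n c (Aup n \<sigma> i)) - g (scal_ind n c (Aup n \<sigma> (Suc i)))" for i c
  have sum_form: "f z = g (scal_ind n 0 {}) + (\<Sum>i\<in>{1..n}. T i (z (\<sigma> i)))"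
    if "z \<in> tuples_sigma n I \<sigma>" for z
    using rep \<sigma> that unfolding rep_by_def T_def by blast
  have "(\<Sum>i\<in>{1..n}. T i (x (\<sigma> i))) + (\<Sum>i\<in>{1..n}. T i (y (\<sigma> i)))
      = (\<Sum>i\<in>{1..n}. T i (u (\<sigma> i))) + (\<Sum>i\<in>{1..n}. T i (v (\<sigma> i)))"
    unfolding sum.distrib[symmetric]
  proof (rule sum.cong)
    fix i assume "i \<in> {1..n}"
    then show "T i (x (\<sigma> i)) + T i (y (\<sigma> i)) = T i (u (\<sigma> i)) + T i (v (\<sigma> i))"
      using pairs[of i] by auto
  qed simp
  then show ?thesis
    using sum_form[OF x] sum_form[OF y] sum_form[OF u] sum_form[OF v] by linarith
qed

text \<open>(iii) implies (i): meet and join of comonotonic tuples carry the values of the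
  original pair at every position.\<close>

lemma rep_imp_comon_modular:
  assumes rep: "rep_by n I f g"
  shows "comon_modular n I f"
  unfolding comon_modular_def
proof (intro ballI impI)
  fix x y assume "comonotonic n I x y"
  then obtain \<sigma> where \<sigma>: "\<sigma> permutes {1..n}"
    and x: "x \<in> tuples_sigma n I \<sigma>" and y: "y \<in> tuples_sigma n I \<sigma>"
    unfolding comonotonic_def by blast
  have meet_val: "cmin n x y (\<sigma> i) = min (x (\<sigma> i)) (y (\<sigma> i))"
    and join_val: "cmax n x y (\<sigma> i) = max (x (\<sigma> i)) (y (\<sigma> i))" if "i \<in> {1..n}" for i
    using permutes_range_mem[OF \<sigma> that] by (simp_all add: cmin_def cmax_def)
  have meet: "cmin n x y \<in> tuples_sigma n I \<sigma>"
    by (rule tuples_sigma_pointwise[where \<phi> = min, OF \<sigma> x y _ meet_val])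
      (auto simp: cmin_def extensional_def min_def)
  have join: "cmax n x y \<in> tuples_sigma n I \<sigma>"
    by (rule tuples_sigma_pointwise[where \<phi> = max, OF \<sigma> x y _ join_val])
      (auto simp: cmax_def extensional_def max_def)
  show "f x + f y = f (cmin n x y) + f (cmax n x y)"
    by (rule representation_exchange[OF rep \<sigma> x y meet join])
      (auto simp: meet_val join_val min_def max_def)
qed

text \<open>(iii) implies (ii): for \<open>a = x\<^sub>\<sigma>\<^sub>(\<^sub>i\<^sub>)\<close>, the pair \<open>(a, min([a]\<^sub>c, c))\<close> is \<open>(a, 0)\<close> if
  \<open>a \<le> c\<close> and \<open>(a, c)\<close> otherwise, i.e. the pair \<open>(min(a, c), [a]\<^sub>c)\<close> up to order.\<close>

lemma rep_imp_horiz_min_inv: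
  assumes rep: "rep_by n I f g" and I_nonneg: "I \<subseteq> {0..}" and zero_I: "0 \<in> I"
  shows "horiz_min_inv n I f"
  unfolding horiz_min_inv_def
proof (intro ballI)
  fix x c assume "x \<in> tuples n I" and c_I: "c \<in> I"
  then obtain \<sigma> where \<sigma>: "\<sigma> permutes {1..n}" and x: "x \<in> tuples_sigma n I \<sigma>"
    by (blast elim: sorting_permutation_exists)
  define cut where "cut a = (if a \<le> c then 0 else a)" for a :: real
  have c_nonneg: "0 \<le> c" using c_I I_nonneg by auto
  have x_nonneg: "0 \<le> x (\<sigma> i)" if "i \<in> {1..n}" for i
    using tuples_sigmaD(2)[OF \<sigma> x that] I_nonneg by auto
  have trunc_val: "cminc n x c (\<sigma> i) = min (x (\<sigma> i)) c"
    and cut_val: "cutc n c x (\<sigma> i) = cut (x (\<sigma> i))"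
    and cut_trunc_val: "cminc n (cutc n c x) c (\<sigma> i) = min (cut (x (\<sigma> i))) c"
    if "i \<in> {1..n}" for i
    using permutes_range_mem[OF \<sigma> that] by (simp_all add: cminc_def cutc_def cut_def)
  have min_I: "min a b \<in> I" if "a \<in> I" "b \<in> I" for a b
    using that by (simp add: min_def)
  have cut_I: "cut a \<in> I" if "a \<in> I" for a
    using that zero_I by (simp add: cut_def)
  have cut_mono: "cut a \<le> cut b" if "a \<in> I" "a \<le> b" for a b
    using that I_nonneg by (auto simp: cut_def)
  have trunc: "cminc n x c \<in> tuples_sigma n I \<sigma>"
    by (rule tuples_sigma_pointwise[where \<phi> = "\<lambda>a _. min a c", OF \<sigma> x x _ trunc_val])
      (auto simp: cminc_def extensional_def c_I min_I intro: min.mono)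
  have cutx: "cutc n c x \<in> tuples_sigma n I \<sigma>"
    by (rule tuples_sigma_pointwise[where \<phi> = "\<lambda>a _. cut a", OF \<sigma> x x _ cut_val])
      (auto simp: cutc_def extensional_def cut_I cut_mono)
  have cut_trunc: "cminc n (cutc n c x) c \<in> tuples_sigma n I \<sigma>"
    by (rule tuples_sigma_pointwise[where \<phi> = "\<lambda>a _. min (cut a) c", OF \<sigma> x x _ cut_trunc_val])
      (simp_all add: cminc_def extensional_def c_I cut_I min_I min.coboundedI1 cut_mono)
  have "f x + f (cminc n (cutc n c x) c) = f (cminc n x c) + f (cutc n c x)"
    by (rule representation_exchange[OF rep \<sigma> x cut_trunc trunc cutx])
      (use x_nonneg c_nonneg in \<open>auto simp: trunc_val cut_val cut_trunc_val cut_def\<close>)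
  then show "f x - f (cminc n x c) = f (cutc n c x) - f (cminc n (cutc n c x) c)"
    by linarith
qed

theorem theorem9:
  fixes n :: nat and I :: "real set" and f :: "(nat \<Rightarrow> real) \<Rightarrow> real"
  assumes "is_interval I" and "I \<subseteq> {0..}" and "0 \<in> I"
  shows "(comon_modular n I f \<longleftrightarrow> horiz_min_inv n I f)
       \<and> (horiz_min_inv n I f \<longleftrightarrow> (\<exists>g. rep_by n I f g))
       \<and> (comon_modular n I f \<longrightarrow> rep_by n I f f)"
proof -
  have i_iii: "comon_modular n I f \<Longrightarrow> rep_by n I f f"
    using comon_modular_imp_rep assms(2,3) by blast
  have ii_iii: "horiz_min_inv n I f \<Longrightarrow> rep_by n I f f"
    using horiz_min_inv_imp_rep assms(2,3) by blast
  have iii_i: "rep_by n I f g \<Longrightarrow> comon_modular n I f" for g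
    by (rule rep_imp_comon_modular)
  have iii_ii: "rep_by n I f g \<Longrightarrow> horiz_min_inv n I f" for g
    using rep_imp_horiz_min_inv assms(2,3) by blast
  show ?thesis
    using i_iii ii_iii iii_i iii_ii by blast
qed

end
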